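(* Let $n \ge 2$ be even. Then for every $N$ with $1 \le N \le \frac{3n}{2}$, there exists a finite sequence of $n$-crossing permutations over $S_{3n/2}$ whose product sends $1$ to $N$.
   Context: For integers $2\le n\le m$ and $1 \le j \le m-n+1$, the $n$-crossing permutation $\pi_j\in S_m$ is $\pi_j=(j,\,j+n-1)(j+1,\,j+n-2)\cdots$, i.e. the involution sending $i \mapsto 2j+n-1-i$ for $j\le i\le j+n-1$ and fixing all other elements of $\{1,\dots,m\}$. The $n$-crossing permutations over $S_m$ are $\pi_1,\dots,\pi_{m-n+1}$. *)

theory Defs
  imports Main
begin

text \<open>The n-crossing permutation pi_j over S_m, as a function on nat:
  i maps to 2j+n-1-i for j <= i <= j+n-1, every other point is fixed
  (points outside {1..m} are fixed too, since j+n-1 <= m).\<close>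
definition crossing_perm :: "nat \<Rightarrow> nat \<Rightarrow> nat \<Rightarrow> nat" where
  "crossing_perm n j i = (if j \<le> i \<and> i \<le> j + n - 1 then 2 * j + n - 1 - i else i)"

definition crossing_perms :: "nat \<Rightarrow> nat \<Rightarrow> (nat \<Rightarrow> nat) set" where
  "crossing_perms n m = {crossing_perm n j | j. 1 \<le> j \<and> j \<le> m - n + 1}"

end

theory Submission
  imports Defs
begin

text \<open>Inside the window of pi_j, applying pi_j and then pi_(j+1) moves a point
  two steps to the right, so from 1 all odd points of {1..m} are reachable as soon
  as two consecutive crossings exist (n < m). For even n the reflection pi_1 sends
  the odd point n - 1 to 2, and from 2 the same shifts reach all even points.\<close>

definition reachable_from_one :: "nat \<Rightarrow> nat \<Rightarrow> nat \<Rightarrow> bool" where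
  "reachable_from_one n m x \<longleftrightarrow>
     (\<exists>ps. set ps \<subseteq> crossing_perms n m \<and> foldr (\<circ>) ps id 1 = x)"

lemma reachable_from_one_one: "reachable_from_one n m 1"
  unfolding reachable_from_one_def by (rule exI[of _ "[]"]) simp

lemma reachable_from_one_apply:
  assumes "reachable_from_one n m x" and "p \<in> crossing_perms n m"
  shows "reachable_from_one n m (p x)"
proof -
  obtain ps where "set ps \<subseteq> crossing_perms n m" and "foldr (\<circ>) ps id 1 = x"
    using assms(1) unfolding reachable_from_one_def by blast
  with assms(2) show ?thesis
    unfolding reachable_from_one_def by (intro exI[of _ "p # ps"]) simp
qed

lemma crossing_perm_in_crossing_perms:
  "1 \<le> j \<Longrightarrow> j \<le> m - n + 1 \<Longrightarrow> crossing_perm n j \<in> crossing_perms n m"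
  unfolding crossing_perms_def by blast

lemma crossing_perm_Suc_crossing_perm:
  assumes "j \<le> x" and "x + 2 \<le> j + n"
  shows "crossing_perm n (Suc j) (crossing_perm n j x) = x + 2"
  using assms unfolding crossing_perm_def by auto

lemma reachable_from_one_add_two:
  assumes "2 \<le> n" "n < m" "1 \<le> x" "x + 2 \<le> m"
    and "reachable_from_one n m x"
  shows "reachable_from_one n m (x + 2)"
proof -
  define j where "j = (if x + 2 \<le> n then 1 else x + 2 - n)"
  have window: "j \<le> x" "x + 2 \<le> j + n" and bounds: "1 \<le> j" "Suc j \<le> m - n + 1"
    using assms(1-4) unfolding j_def by auto
  have "crossing_perm n j \<in> crossing_perms n m" "crossing_perm n (Suc j) \<in> crossing_perms n m"
    using bounds by (auto intro: crossing_perm_in_crossing_perms)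
  then have "reachable_from_one n m (crossing_perm n (Suc j) (crossing_perm n j x))"
    using assms(5) by (blast intro: reachable_from_one_apply[OF reachable_from_one_apply])
  then show ?thesis
    using crossing_perm_Suc_crossing_perm[OF window] by simp
qed

lemma reachable_from_one_add_even:
  assumes "2 \<le> n" "n < m" "1 \<le> x" "x + 2 * d \<le> m"
    and "reachable_from_one n m x"
  shows "reachable_from_one n m (x + 2 * d)"
  using assms(4)
proof (induction d)
  case 0
  show ?case using assms(5) by simp
next
  case (Suc d)
  then have "reachable_from_one n m (x + 2 * d + 2)"
    using assms(1-3) by (intro reachable_from_one_add_two) auto
  then show ?case by (simp add: algebra_simps)
qed

lemma reachable_from_one_odd:
  assumes "2 \<le> n" "n < m" "2 * d + 1 \<le> m"
  shows "reachable_from_one n m (2 * d + 1)"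
  using reachable_from_one_add_even[OF assms(1,2), of 1 d] assms(3)
    reachable_from_one_one by (simp add: add.commute)

lemma reachable_from_one_two:
  assumes "even n" "2 \<le> n" "n < m"
  shows "reachable_from_one n m 2"
proof -
  obtain k where "n = 2 * k" using assms(1) by blast
  then have d: "n - 1 = 2 * (k - 1) + 1" using assms(2) by simp
  have "reachable_from_one n m (n - 1)"
    using reachable_from_one_odd[OF assms(2,3), of "k - 1"] d assms(3) by simp
  moreover have "crossing_perm n 1 \<in> crossing_perms n m"
    by (rule crossing_perm_in_crossing_perms) auto
  ultimately have "reachable_from_one n m (crossing_perm n 1 (n - 1))"
    by (rule reachable_from_one_apply)
  moreover have "crossing_perm n 1 (n - 1) = 2"
    using assms(2) unfolding crossing_perm_def by auto
  ultimately show ?thesis by simp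
qed

theorem lemma2p3:
  fixes n N :: nat
  assumes "even n" and "n \<ge> 2"
    and "1 \<le> N" and "N \<le> 3 * n div 2"
  shows "\<exists>ps. set ps \<subseteq> crossing_perms n (3 * n div 2) \<and> foldr (\<circ>) ps id 1 = N"
proof -
  define m where "m = 3 * n div 2"
  have "n < m" using assms(1,2) unfolding m_def by auto
  have "reachable_from_one n m N"
  proof (cases "even N")
    case True
    then obtain k where "N = 2 * k" by blast
    then have "N = 2 + 2 * (k - 1)" using assms(3) by simp
    then show ?thesis
      using reachable_from_one_add_even[OF assms(2) \<open>n < m\<close> _ _ reachable_from_one_two]
        assms(1,2,4) \<open>n < m\<close> unfolding m_def by simp
  next
    case False
    then obtain d where "N = 2 * d + 1" using oddE by blast
    then show ?thesis
      using reachable_from_one_odd[OF assms(2) \<open>n < m\<close>] assms(4) unfolding m_def by simp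
  qed
  then show ?thesis unfolding reachable_from_one_def m_def .
qed

end
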